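(* Let $M$ be a commutative monoid. A nonempty closed subset $X$ of the terminal space $\mathcal S(M)$ is irreducible if and only if $\mathcal K(X)=\bigcap_{I\in X}I$ is a strongly irreducible ideal of $M$.
   Context: A monoid is a commutative monoid $(M,\cdot,1)$. An ideal of $M$ is a subset $I\subseteq M$ such that $im\in I$ for all $i\in I$, $m\in M$; it is proper if $I\neq M$. A proper ideal $K$ of $M$ is strongly irreducible if for all ideals $I,J$ of $M$, $I\cap J\subseteq K$ implies $I\subseteq K$ or $J\subseteq K$. $\mathcal S(M)$ is the set of all strongly irreducible ideals of $M$. For $X\subseteq\mathcal S(M)$, $\mathcal K(X)=\bigcap_{I\in X}I$, and $\mathcal{HK}(X)=\{J\in\mathcal S(M)\mid J\supseteq\mathcal K(X)\}$ if $X\neq\emptyset$, $\mathcal{HK}(\emptyset)=\emptyset$. The terminal space of $M$ is the set $\mathcal S(M)$ with the topology whose closed sets are exactly the sets $\mathcal{HK}(X)$, $X\subseteq\mathcal S(M)$. A subset $Y$ of a topological space is irreducible if whenever $Y\subseteq Y_1\cup Y_2$ with $Y_1,Y_2$ closed, then $Y\subseteq Y_1$ or $Y\subseteq Y_2$. *)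

theory Defs
  imports Main
begin

text \<open>The commutative monoid M is the whole type 'a of class comm_monoid_mult.\<close>

definition monoid_ideal :: "'a::comm_monoid_mult set \<Rightarrow> bool" where
  "monoid_ideal I \<longleftrightarrow> (\<forall>i\<in>I. \<forall>m. i * m \<in> I)"

definition strongly_irreducible :: "'a::comm_monoid_mult set \<Rightarrow> bool" where
  "strongly_irreducible K \<longleftrightarrow> monoid_ideal K \<and> K \<noteq> UNIV \<and>
     (\<forall>I J. monoid_ideal I \<longrightarrow> monoid_ideal J \<longrightarrow> I \<inter> J \<subseteq> K \<longrightarrow> I \<subseteq> K \<or> J \<subseteq> K)"

definition SI :: "'a::comm_monoid_mult set set" where
  "SI = {K. strongly_irreducible K}"

definition KK :: "'a::comm_monoid_mult set set \<Rightarrow> 'a set" where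
  "KK X = \<Inter>X"

definition HK :: "'a::comm_monoid_mult set set \<Rightarrow> 'a set set" where
  "HK X = (if X = {} then {} else {J \<in> SI. KK X \<subseteq> J})"

definition terminal_closed :: "'a::comm_monoid_mult set set \<Rightarrow> bool" where
  "terminal_closed Y \<longleftrightarrow> (\<exists>X \<subseteq> SI. Y = HK X)"

definition terminal_irreducible :: "'a::comm_monoid_mult set set \<Rightarrow> bool" where
  "terminal_irreducible Y \<longleftrightarrow> (\<forall>Y1 Y2. terminal_closed Y1 \<longrightarrow> terminal_closed Y2 \<longrightarrow>
      Y \<subseteq> Y1 \<union> Y2 \<longrightarrow> Y \<subseteq> Y1 \<or> Y \<subseteq> Y2)"

end

theory Submission
  imports Defs
begin

text \<open>A closed set X of the terminal space consists of all strongly irreducible ideals containing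
  \<open>\<K>(X)\<close>. If \<open>\<K>(X)\<close> is itself strongly irreducible, it is therefore a generic point of X: every
  closed set containing it contains X, so X cannot be split by two closed sets. Conversely, if
  \<open>I \<inter> J \<subseteq> \<K>(X)\<close>, every member of X contains I or J, so X is covered by the closed sets of its
  members containing I and those containing J; irreducibility puts X into one of them, i.e.
  \<open>I \<subseteq> \<K>(X)\<close> or \<open>J \<subseteq> \<K>(X)\<close>.\<close>

lemma terminal_closed_eq:
  assumes "terminal_closed Y"
  shows "Y = {P \<in> SI. KK Y \<subseteq> P}"
proof -
  obtain Z where Z: "Z \<subseteq> SI" "Y = HK Z"
    using assms unfolding terminal_closed_def by blast
  show ?thesis
  proof (cases "Z = {}")
    case True
    then show ?thesis
      using Z by (auto simp: HK_def KK_def SI_def strongly_irreducible_def)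
  next
    case False
    then have Y: "Y = {J \<in> SI. \<Inter>Z \<subseteq> J}"
      using Z by (simp add: HK_def KK_def)
    with Z(1) have "\<Inter>Y = \<Inter>Z" by auto
    with Y show ?thesis by (simp add: KK_def)
  qed
qed

lemma terminal_closedI:
  assumes "Y \<subseteq> SI" and "\<And>P. P \<in> SI \<Longrightarrow> KK Y \<subseteq> P \<Longrightarrow> P \<in> Y"
  shows "terminal_closed Y"
proof (cases "Y = {}")
  case True
  then show ?thesis unfolding terminal_closed_def HK_def by auto
next
  case False
  with assms have "Y = HK Y" unfolding HK_def KK_def by auto
  with assms(1) show ?thesis unfolding terminal_closed_def by blast
qed

lemma terminal_closed_restrict_superset:
  assumes "terminal_closed X"
  shows "terminal_closed {P \<in> X. A \<subseteq> P}"
proof (rule terminal_closedI)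
  have X: "X = {P \<in> SI. KK X \<subseteq> P}"
    using terminal_closed_eq[OF assms] .
  then show "{P \<in> X. A \<subseteq> P} \<subseteq> SI" by blast
  fix P assume P: "P \<in> SI" "KK {P \<in> X. A \<subseteq> P} \<subseteq> P"
  have "KK X \<subseteq> KK {P \<in> X. A \<subseteq> P}" and "A \<subseteq> KK {P \<in> X. A \<subseteq> P}"
    unfolding KK_def by auto
  with P X show "P \<in> {P \<in> X. A \<subseteq> P}" by blast
qed

lemma monoid_ideal_KK:
  assumes "X \<subseteq> SI"
  shows "monoid_ideal (KK X)"
  using assms unfolding KK_def SI_def strongly_irreducible_def monoid_ideal_def by blast

lemma KK_neq_UNIV:
  assumes "X \<subseteq> SI" and "X \<noteq> {}"
  shows "KK X \<noteq> UNIV"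
  using assms unfolding KK_def SI_def strongly_irreducible_def by blast

lemma terminal_closed_subset_if_KK_mem:
  assumes "X \<subseteq> SI" and "terminal_closed Y" and "KK X \<in> Y"
  shows "X \<subseteq> Y"
proof
  fix P assume "P \<in> X"
  moreover have "KK Y \<subseteq> KK X" using assms(3) unfolding KK_def by auto
  ultimately have "P \<in> SI" and "KK Y \<subseteq> P"
    using assms(1) unfolding KK_def by auto
  then show "P \<in> Y" using terminal_closed_eq[OF assms(2)] by blast
qed

lemma terminal_irreducible_if_KK_mem:
  assumes "X \<subseteq> SI" and "KK X \<in> X"
  shows "terminal_irreducible X"
  unfolding terminal_irreducible_def
  using assms terminal_closed_subset_if_KK_mem by blast

lemma strongly_irreducible_KK_if_terminal_irreducible:
  assumes "X \<subseteq> SI" and "X \<noteq> {}" and "terminal_closed X" and irr: "terminal_irreducible X"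
  shows "strongly_irreducible (KK X)"
proof -
  have "I \<subseteq> KK X \<or> J \<subseteq> KK X"
    if "monoid_ideal I" and "monoid_ideal J" and IJ: "I \<inter> J \<subseteq> KK X" for I J
  proof -
    have "X \<subseteq> {P \<in> X. I \<subseteq> P} \<union> {P \<in> X. J \<subseteq> P}"
    proof
      fix P assume P: "P \<in> X"
      with IJ have "I \<inter> J \<subseteq> P" unfolding KK_def by auto
      with P assms(1) that have "I \<subseteq> P \<or> J \<subseteq> P"
        unfolding SI_def strongly_irreducible_def by blast
      with P show "P \<in> {P \<in> X. I \<subseteq> P} \<union> {P \<in> X. J \<subseteq> P}" by blast
    qed
    with irr assms(3) have "X \<subseteq> {P \<in> X. I \<subseteq> P} \<or> X \<subseteq> {P \<in> X. J \<subseteq> P}"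
      unfolding terminal_irreducible_def by (blast intro: terminal_closed_restrict_superset)
    then show ?thesis unfolding KK_def by auto
  qed
  with monoid_ideal_KK[OF assms(1)] KK_neq_UNIV[OF assms(1,2)] show ?thesis
    unfolding strongly_irreducible_def by blast
qed

theorem theorem2p6:
  fixes X :: "'a::comm_monoid_mult set set"
  assumes "X \<subseteq> SI" and "X \<noteq> {}" and "terminal_closed X"
  shows "terminal_irreducible X \<longleftrightarrow> strongly_irreducible (KK X)"
proof
  assume "terminal_irreducible X"
  with assms show "strongly_irreducible (KK X)"
    by (rule strongly_irreducible_KK_if_terminal_irreducible)
next
  assume "strongly_irreducible (KK X)"
  then have "KK X \<in> X"
    using terminal_closed_eq[OF assms(3)] unfolding SI_def by blast
  with assms(1) show "terminal_irreducible X"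
    by (rule terminal_irreducible_if_KK_mem)
qed

end
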